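(* Let $\Gamma$ be a graph and let $s\neq t$ be vertices of $\Gamma$. Then the subgroups $S_5(s)$ and $S_5(t)$ are not conjugate in $G(C_\Gamma)$.
   Context: Let $\Gamma$ be a graph with vertex set $S$ and symmetric adjacency relation (loops, if present, are ignored; "adjacent" refers to distinct vertices). $G(C_\Gamma)$ is the group with generators $s_1,s_2,s_3,s_4$ for each $s\in S$ and exactly the following relations: every generator is an involution; for each $s\in S$, $(s_is_{i+1})^3=e$ for $i=1,2,3$ and $(s_is_j)^2=e$ for $|i-j|\ge2$; for all distinct $s,t\in S$, $(s_4t_4)^2=e$; for all distinct adjacent $s,t\in S$, $(s_1t_1)^2=(s_1t_3)^2=(s_3t_1)^2=(s_3t_3)^2=e$. For $s\in S$, $S_5(s)=\langle s_1,s_2,s_3,s_4\rangle\le G(C_\Gamma)$ (isomorphic to $S_5$). *)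

theory Defs
  imports "HOL-Algebra.Generated_Groups"
begin

text \<open>Generators s_i of G(C_Gamma) are encoded as pairs (s, i) with s in S and i in {1..4}.
  Since every generator is an involution, group elements are represented by positive words
  (lists of generators) modulo the relators; the involution relation is itself a relator.\<close>

definition gens :: "'a set \<Rightarrow> ('a \<times> nat) set" where
  "gens S = S \<times> {1..4}"

definition relators :: "'a set \<Rightarrow> ('a \<Rightarrow> 'a \<Rightarrow> bool) \<Rightarrow> ('a \<times> nat) list set" where
  "relators S E =
     {[x, x] | x. x \<in> gens S}
   \<union> {concat (replicate 3 [(s, i), (s, Suc i)]) | s i. s \<in> S \<and> i \<in> {1..3}}
   \<union> {concat (replicate 2 [(s, i), (s, j)]) | s i j.
        s \<in> S \<and> i \<in> {1..4} \<and> j \<in> {1..4} \<and> (i + 2 \<le> j \<or> j + 2 \<le> i)}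
   \<union> {concat (replicate 2 [(s, 4), (t, 4)]) | s t. s \<in> S \<and> t \<in> S \<and> s \<noteq> t}
   \<union> {concat (replicate 2 [(s, i), (t, j)]) | s t i j.
        s \<in> S \<and> t \<in> S \<and> s \<noteq> t \<and> E s t \<and> i \<in> {1, 3} \<and> j \<in> {1, 3}}"

inductive pres_eq :: "'g list set \<Rightarrow> 'g list \<Rightarrow> 'g list \<Rightarrow> bool" for R where
  refl: "pres_eq R w w"
| sym: "pres_eq R u v \<Longrightarrow> pres_eq R v u"
| trans: "pres_eq R u v \<Longrightarrow> pres_eq R v w \<Longrightarrow> pres_eq R u w"
| del: "r \<in> R \<Longrightarrow> pres_eq R (u @ r @ v) (u @ v)"

definition pres_class :: "'a set \<Rightarrow> ('a \<Rightarrow> 'a \<Rightarrow> bool) \<Rightarrow> ('a \<times> nat) list \<Rightarrow> ('a \<times> nat) list set" where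
  "pres_class S E w = {v \<in> lists (gens S). pres_eq (relators S E) v w}"

definition GC :: "'a set \<Rightarrow> ('a \<Rightarrow> 'a \<Rightarrow> bool) \<Rightarrow> ('a \<times> nat) list set monoid" where
  "GC S E = \<lparr> carrier = {pres_class S E w | w. w \<in> lists (gens S)},
              mult = (\<lambda>A B. pres_class S E ((SOME a. a \<in> A) @ (SOME b. b \<in> B))),
              one = pres_class S E [] \<rparr>"

definition S5 :: "'a set \<Rightarrow> ('a \<Rightarrow> 'a \<Rightarrow> bool) \<Rightarrow> 'a \<Rightarrow> ('a \<times> nat) list set set" where
  "S5 S E s = generate (GC S E) {pres_class S E [(s, i)] | i. i \<in> {1..4}}"

end

theory Submission
  imports Defs
begin

text \<open>Every relator of \<open>G(C_\<Gamma>)\<close>, whatever the graph \<open>\<Gamma>\<close>, contains an even number of letters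
  belonging to any fixed vertex \<open>s\<close>. Hence the classes of words with an even number of such
  letters form a subgroup (the kernel of a parity homomorphism onto \<open>\<int>/2\<close>). It contains
  \<open>S\<^sub>5(t)\<close> for \<open>t \<noteq> s\<close>, but no conjugate of \<open>s\<^sub>1 \<in> S\<^sub>5(s)\<close>.\<close>

lemma pres_eq_in_context:
  "pres_eq R u v \<Longrightarrow> pres_eq R (x @ u @ y) (x @ v @ y)"
proof (induction rule: pres_eq.induct)
  case (refl w)
  show ?case by (rule pres_eq.refl)
next
  case (sym u v)
  show ?case by (rule pres_eq.sym[OF sym.IH])
next
  case (trans u v w)
  show ?case by (rule pres_eq.trans[OF trans.IH])
next
  case (del r u v)
  show ?case using pres_eq.del[OF del, of "x @ u" "v @ y"] by simp
qed

lemma pres_eq_append: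
  assumes "pres_eq R u u'" and "pres_eq R v v'"
  shows "pres_eq R (u @ v) (u' @ v')"
  using pres_eq_in_context[OF assms(1), of "[]" v] pres_eq_in_context[OF assms(2), of u' "[]"]
  by (auto intro: pres_eq.trans)

lemma pres_eq_even_filter:
  assumes "\<And>r. r \<in> R \<Longrightarrow> even (length (filter P r))" and "pres_eq R u v"
  shows "even (length (filter P u)) \<longleftrightarrow> even (length (filter P v))"
  using assms(2) by induction (auto dest: assms(1))

lemma pres_eq_rev_append_self:
  "w \<in> lists (gens S) \<Longrightarrow> pres_eq (relators S E) (rev w @ w) []"
proof (induction w)
  case Nil
  show ?case by (simp add: pres_eq.refl)
next
  case (Cons x w)
  have "x \<in> gens S"
    using Cons.prems by simp
  then have "[x, x] \<in> relators S E"
    unfolding relators_def by blast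
  then have "pres_eq (relators S E) (rev (x # w) @ x # w) (rev w @ w)"
    using pres_eq.del[of "[x, x]" _ "rev w" w] by simp
  with Cons show ?case by (auto intro: pres_eq.trans)
qed

lemma pres_class_self: "w \<in> lists (gens S) \<Longrightarrow> w \<in> pres_class S E w"
  by (simp add: pres_class_def pres_eq.refl)

lemma pres_class_eq_iff:
  assumes "u \<in> lists (gens S)" and "v \<in> lists (gens S)"
  shows "pres_class S E u = pres_class S E v \<longleftrightarrow> pres_eq (relators S E) u v"
proof
  assume "pres_class S E u = pres_class S E v"
  then show "pres_eq (relators S E) u v"
    using pres_class_self[OF assms(1), of E] by (simp add: pres_class_def)
next
  assume "pres_eq (relators S E) u v"
  then show "pres_class S E u = pres_class S E v"
    unfolding pres_class_def by (auto intro: pres_eq.trans pres_eq.sym)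
qed

lemma GC_carrier: "g \<in> carrier (GC S E) \<longleftrightarrow> (\<exists>w \<in> lists (gens S). g = pres_class S E w)"
  by (auto simp: GC_def)

lemma GC_one: "\<one>\<^bsub>GC S E\<^esub> = pres_class S E []"
  by (simp add: GC_def)

lemma GC_mult_pres_class:
  assumes "u \<in> lists (gens S)" and "v \<in> lists (gens S)"
  shows "pres_class S E u \<otimes>\<^bsub>GC S E\<^esub> pres_class S E v = pres_class S E (u @ v)"
proof -
  have rep: "(SOME a. a \<in> pres_class S E w) \<in> pres_class S E w" if "w \<in> lists (gens S)" for w
    using pres_class_self[OF that] by (rule someI)
  let ?a = "SOME a. a \<in> pres_class S E u" and ?b = "SOME b. b \<in> pres_class S E v"
  have "?a \<in> lists (gens S)" "pres_eq (relators S E) ?a u"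
    and "?b \<in> lists (gens S)" "pres_eq (relators S E) ?b v"
    using rep[OF assms(1)] rep[OF assms(2)] by (auto simp: pres_class_def)
  then have "pres_class S E (?a @ ?b) = pres_class S E (u @ v)"
    using assms by (simp add: pres_class_eq_iff pres_eq_append)
  then show ?thesis by (simp add: GC_def)
qed

lemma GC_pres_class_rev_mult:
  assumes "w \<in> lists (gens S)"
  shows "pres_class S E (rev w) \<otimes>\<^bsub>GC S E\<^esub> pres_class S E w = \<one>\<^bsub>GC S E\<^esub>"
proof -
  have "rev w \<in> lists (gens S)"
    using assms by auto
  with assms show ?thesis
    by (simp add: GC_mult_pres_class GC_one pres_class_eq_iff pres_eq_rev_append_self)
qed

lemma GC_group: "group (GC S E)"
proof (rule groupI)
  fix x y z
  assume "x \<in> carrier (GC S E)" "y \<in> carrier (GC S E)" "z \<in> carrier (GC S E)"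
  then obtain u v w where "u \<in> lists (gens S)" "v \<in> lists (gens S)" "w \<in> lists (gens S)"
    and "x = pres_class S E u" "y = pres_class S E v" "z = pres_class S E w"
    by (auto simp: GC_carrier)
  then show "x \<otimes>\<^bsub>GC S E\<^esub> y \<in> carrier (GC S E)"
    and "x \<otimes>\<^bsub>GC S E\<^esub> y \<otimes>\<^bsub>GC S E\<^esub> z = x \<otimes>\<^bsub>GC S E\<^esub> (y \<otimes>\<^bsub>GC S E\<^esub> z)"
    by (auto simp: GC_mult_pres_class GC_carrier intro!: bexI[of _ "u @ v"])
next
  fix x
  assume "x \<in> carrier (GC S E)"
  then obtain u where u: "u \<in> lists (gens S)" "x = pres_class S E u"
    by (auto simp: GC_carrier)
  then show "\<one>\<^bsub>GC S E\<^esub> \<otimes>\<^bsub>GC S E\<^esub> x = x"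
    using GC_mult_pres_class[of "[]" S u E] by (simp add: GC_one)
  have "pres_class S E (rev u) \<in> carrier (GC S E)"
    using u by (auto simp: GC_carrier)
  with u show "\<exists>y \<in> carrier (GC S E). y \<otimes>\<^bsub>GC S E\<^esub> x = \<one>\<^bsub>GC S E\<^esub>"
    using GC_pres_class_rev_mult by blast
qed (auto simp: GC_carrier GC_one)

lemma GC_inv_pres_class:
  assumes "w \<in> lists (gens S)"
  shows "inv\<^bsub>GC S E\<^esub> (pres_class S E w) = pres_class S E (rev w)"
proof -
  interpret group "GC S E" by (rule GC_group)
  show ?thesis
    using assms GC_pres_class_rev_mult[OF assms]
    by (intro inv_equality) (auto simp: GC_carrier)
qed

lemma GC_conjugate_pres_class:
  assumes "w \<in> lists (gens S)" and "u \<in> lists (gens S)"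
  shows "pres_class S E w \<otimes>\<^bsub>GC S E\<^esub> pres_class S E u \<otimes>\<^bsub>GC S E\<^esub> inv\<^bsub>GC S E\<^esub> pres_class S E w
    = pres_class S E (w @ u @ rev w)"
proof -
  have "rev w \<in> lists (gens S)" and "w @ u \<in> lists (gens S)"
    using assms by auto
  with assms show ?thesis
    by (simp add: GC_inv_pres_class GC_mult_pres_class)
qed

definition vertex_count :: "'a \<Rightarrow> ('a \<times> nat) list \<Rightarrow> nat" where
  "vertex_count s w = length (filter (\<lambda>x. fst x = s) w)"

lemma vertex_count_Nil [simp]: "vertex_count s [] = 0"
  by (simp add: vertex_count_def)

lemma vertex_count_Cons [simp]:
  "vertex_count s (x # w) = (if fst x = s then Suc (vertex_count s w) else vertex_count s w)"
  by (simp add: vertex_count_def)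

lemma vertex_count_append [simp]: "vertex_count s (u @ v) = vertex_count s u + vertex_count s v"
  by (simp add: vertex_count_def)

lemma vertex_count_rev [simp]: "vertex_count s (rev w) = vertex_count s w"
  by (simp add: vertex_count_def flip: rev_filter)

lemma vertex_count_concat_replicate [simp]:
  "vertex_count s (concat (replicate n w)) = n * vertex_count s w"
  by (induction n) auto

lemma even_vertex_count_relator: "r \<in> relators S E \<Longrightarrow> even (vertex_count s r)"
  unfolding relators_def by auto

lemma pres_eq_even_vertex_count:
  assumes "pres_eq (relators S E) u v"
  shows "even (vertex_count s u) \<longleftrightarrow> even (vertex_count s v)"
  unfolding vertex_count_def
  by (rule pres_eq_even_filter[OF even_vertex_count_relator[unfolded vertex_count_def] assms])

definition even_vertex_classes :: "'a set \<Rightarrow> ('a \<Rightarrow> 'a \<Rightarrow> bool) \<Rightarrow> 'a \<Rightarrow> ('a \<times> nat) list set set" where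
  "even_vertex_classes S E s =
     {pres_class S E w | w. w \<in> lists (gens S) \<and> even (vertex_count s w)}"

lemma pres_class_in_even_vertex_classes_iff:
  assumes "w \<in> lists (gens S)"
  shows "pres_class S E w \<in> even_vertex_classes S E s \<longleftrightarrow> even (vertex_count s w)"
proof
  assume "pres_class S E w \<in> even_vertex_classes S E s"
  then obtain v where "v \<in> lists (gens S)" "even (vertex_count s v)"
    and "pres_class S E w = pres_class S E v"
    by (auto simp: even_vertex_classes_def)
  with assms show "even (vertex_count s w)"
    by (metis pres_class_eq_iff pres_eq_even_vertex_count)
next
  assume "even (vertex_count s w)"
  with assms show "pres_class S E w \<in> even_vertex_classes S E s"
    by (auto simp: even_vertex_classes_def)
qed

lemma subgroup_even_vertex_classes: "subgroup (even_vertex_classes S E s) (GC S E)"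
proof -
  interpret group "GC S E" by (rule GC_group)
  show ?thesis
  proof (rule subgroupI)
    show "even_vertex_classes S E s \<subseteq> carrier (GC S E)"
      by (auto simp: even_vertex_classes_def GC_carrier)
    show "even_vertex_classes S E s \<noteq> {}"
      by (auto simp: even_vertex_classes_def intro!: exI[of _ "[]"])
  next
    fix x
    assume "x \<in> even_vertex_classes S E s"
    then obtain w where "w \<in> lists (gens S)" "even (vertex_count s w)" "x = pres_class S E w"
      by (auto simp: even_vertex_classes_def)
    moreover have "rev w \<in> lists (gens S)"
      using \<open>w \<in> lists (gens S)\<close> by auto
    ultimately show "inv\<^bsub>GC S E\<^esub> x \<in> even_vertex_classes S E s"
      by (simp add: GC_inv_pres_class pres_class_in_even_vertex_classes_iff)
  next
    fix x y
    assume "x \<in> even_vertex_classes S E s" "y \<in> even_vertex_classes S E s"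
    then obtain u v where "u \<in> lists (gens S)" "v \<in> lists (gens S)"
      and "even (vertex_count s u)" "even (vertex_count s v)"
      and "x = pres_class S E u" "y = pres_class S E v"
      by (auto simp: even_vertex_classes_def)
    moreover have "u @ v \<in> lists (gens S)"
      using \<open>u \<in> lists (gens S)\<close> \<open>v \<in> lists (gens S)\<close> by auto
    ultimately show "x \<otimes>\<^bsub>GC S E\<^esub> y \<in> even_vertex_classes S E s"
      by (simp add: GC_mult_pres_class pres_class_in_even_vertex_classes_iff)
  qed
qed

lemma S5_subset_even_vertex_classes:
  assumes "t \<in> S" and "t \<noteq> s"
  shows "S5 S E t \<subseteq> even_vertex_classes S E s"
proof -
  interpret group "GC S E" by (rule GC_group)
  have "{pres_class S E [(t, i)] | i. i \<in> {1..4}} \<subseteq> even_vertex_classes S E s"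
    using assms by (auto simp: even_vertex_classes_def gens_def)
  then show ?thesis
    unfolding S5_def by (rule generate_subgroup_incl[OF _ subgroup_even_vertex_classes])
qed

theorem lemma4p16:
  fixes S :: "'a set" and E :: "'a \<Rightarrow> 'a \<Rightarrow> bool" and s t :: 'a
  assumes "\<forall>x y. E x y \<longrightarrow> E y x"
    and "s \<in> S" and "t \<in> S" and "s \<noteq> t"
  shows "\<not> (\<exists>g \<in> carrier (GC S E).
            (\<lambda>h. g \<otimes>\<^bsub>GC S E\<^esub> h \<otimes>\<^bsub>GC S E\<^esub> inv\<^bsub>GC S E\<^esub> g) ` S5 S E s = S5 S E t)"
proof
  assume "\<exists>g \<in> carrier (GC S E).
            (\<lambda>h. g \<otimes>\<^bsub>GC S E\<^esub> h \<otimes>\<^bsub>GC S E\<^esub> inv\<^bsub>GC S E\<^esub> g) ` S5 S E s = S5 S E t"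
  then obtain w where w: "w \<in> lists (gens S)"
    and conj: "(\<lambda>h. pres_class S E w \<otimes>\<^bsub>GC S E\<^esub> h \<otimes>\<^bsub>GC S E\<^esub> inv\<^bsub>GC S E\<^esub> pres_class S E w)
                 ` S5 S E s = S5 S E t"
    by (metis GC_carrier)
  have s1: "[(s, 1)] \<in> lists (gens S)"
    using assms(2) by (simp add: gens_def)
  have "pres_class S E [(s, 1)] \<in> S5 S E s"
    unfolding S5_def by (rule generate.incl) auto
  then have "pres_class S E w \<otimes>\<^bsub>GC S E\<^esub> pres_class S E [(s, 1)]
      \<otimes>\<^bsub>GC S E\<^esub> inv\<^bsub>GC S E\<^esub> pres_class S E w \<in> S5 S E t"
    unfolding conj[symmetric] by (rule imageI)
  then have "pres_class S E (w @ [(s, 1)] @ rev w) \<in> even_vertex_classes S E s"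
    unfolding GC_conjugate_pres_class[OF w s1]
    by (rule subsetD[OF S5_subset_even_vertex_classes[OF assms(3) assms(4)[symmetric]]])
  moreover have "w @ [(s, 1)] @ rev w \<in> lists (gens S)"
    using w s1 by auto
  ultimately have "even (vertex_count s (w @ [(s, 1)] @ rev w))"
    by (simp only: pres_class_in_even_vertex_classes_iff)
  then show False
    by simp
qed

end
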